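(* Let $\alpha_1,\dots,\alpha_m,\beta_1,\dots,\beta_n$ be indeterminates, let $a_0=1$, $a_k=\sum_{1\le i_1<\dots<i_k\le m}\alpha_{i_1}\cdots\alpha_{i_k}$ ($1\le k\le m$), $b_0=1$, $b_k=\sum_{1\le j_1<\dots<j_k\le n}\beta_{j_1}\cdots\beta_{j_k}$ ($1\le k\le n$), and let $\mathbf{S}=\operatorname{per}(M)\in\mathbb{Z}[\alpha,\beta]$ where $M$ is the $(m+n)\times(m+n)$ matrix whose row $j$ ($1\le j\le n$) has $a_k$ in column $j+k$ ($0\le k\le m$) and $0$ elsewhere, and whose row $n+i$ ($1\le i\le m$) has $b_k$ in column $i+k$ ($0\le k\le n$) and $0$ elsewhere. Then a monomial $\alpha^\mu\beta^\nu$ has nonzero coefficient in $\mathbf{S}$ if and only if it has a syl-representation. (Indeed $\mathbf{S}=\sum_{\mathcal{S}_1,\mathcal{S}_2\in\{0,1\}^{m\times n},\ PC(\mathcal{S}_1,\mathcal{S}_2)}\alpha^{rs(\mathcal{S}_1)}\beta^{cs(\mathcal{S}_2)}$.)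
   Context: For $M\in\{0,1\}^{m\times n}$: $rs(M)=(\sum_j M_{ij})_{i=1..m}$, $cs(M)=(\sum_i M_{ij})_{j=1..n}$, adjusted row sum $ars(M)=(i+\sum_j M_{ij})_{i=1..m}$, adjusted column sum $acs(M)=(j+\sum_i M_{ij})_{j=1..n}$. For $\mathcal{S}_1,\mathcal{S}_2\in\{0,1\}^{m\times n}$, they are properly coupled, written $PC(\mathcal{S}_1,\mathcal{S}_2)$, iff $\{c'_1,\dots,c'_n,r'_1,\dots,r'_m\}=\{1,\dots,m+n\}$ where $c'=acs(\mathcal{S}_1)$ and $r'=ars(\mathcal{S}_2)$. A syl-representation of the term $\alpha^\mu\beta^\nu$ is a pair $(\mathcal{S}_1,\mathcal{S}_2)$ of matrices in $\{0,1\}^{m\times n}$ with $rs(\mathcal{S}_1)=\mu$, $cs(\mathcal{S}_2)=\nu$ and $PC(\mathcal{S}_1,\mathcal{S}_2)$. *)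

theory Defs
  imports Main "HOL-Library.Poly_Mapping" "HOL-Combinatorics.Permutations"
begin

(* Polynomials in Z[alpha, beta]: variables Inl i = alpha_i, Inr j = beta_j;
   a polynomial is a finitely supported map from monomials (exponent maps) to int. *)
type_synonym var = "nat + nat"
type_synonym mon = "var \<Rightarrow>\<^sub>0 nat"
type_synonym zpoly = "mon \<Rightarrow>\<^sub>0 int"

definition Var :: "var \<Rightarrow> zpoly" where
  "Var v = Poly_Mapping.single (Poly_Mapping.single v 1) 1"

definition coeff :: "zpoly \<Rightarrow> mon \<Rightarrow> int" where
  "coeff p t = Poly_Mapping.lookup p t"

definition a_el :: "nat \<Rightarrow> nat \<Rightarrow> zpoly" where
  "a_el m k = (\<Sum>I\<in>{I. I \<subseteq> {1..m} \<and> card I = k}. \<Prod>i\<in>I. Var (Inl i))"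

definition b_el :: "nat \<Rightarrow> nat \<Rightarrow> zpoly" where
  "b_el n k = (\<Sum>J\<in>{J. J \<subseteq> {1..n} \<and> card J = k}. \<Prod>j\<in>J. Var (Inr j))"

definition per :: "nat \<Rightarrow> (nat \<Rightarrow> nat \<Rightarrow> 'a::comm_semiring_1) \<Rightarrow> 'a" where
  "per N M = (\<Sum>\<sigma>\<in>{\<sigma>. \<sigma> permutes {1..N}}. \<Prod>r\<in>{1..N}. M r (\<sigma> r))"

definition syl_matrix :: "nat \<Rightarrow> nat \<Rightarrow> nat \<Rightarrow> nat \<Rightarrow> zpoly" where
  "syl_matrix m n r c =
     (if 1 \<le> r \<and> r \<le> n then (if r \<le> c \<and> c - r \<le> m then a_el m (c - r) else 0)
      else if n < r \<and> r \<le> n + m then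
        (let i = r - n in if i \<le> c \<and> c - i \<le> n then b_el n (c - i) else 0)
      else 0)"

definition S_poly :: "nat \<Rightarrow> nat \<Rightarrow> zpoly" where
  "S_poly m n = per (m + n) (syl_matrix m n)"

definition syl_mono :: "nat \<Rightarrow> nat \<Rightarrow> (nat \<Rightarrow> nat) \<Rightarrow> (nat \<Rightarrow> nat) \<Rightarrow> mon" where
  "syl_mono m n \<mu> \<nu> = (\<Sum>i=1..m. Poly_Mapping.single (Inl i) (\<mu> i))
                     + (\<Sum>j=1..n. Poly_Mapping.single (Inr j) (\<nu> j))"

definition is01 :: "nat \<Rightarrow> nat \<Rightarrow> (nat \<Rightarrow> nat \<Rightarrow> nat) \<Rightarrow> bool" where
  "is01 m n S \<longleftrightarrow> (\<forall>i\<in>{1..m}. \<forall>j\<in>{1..n}. S i j \<in> {0, 1})"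

definition rs :: "nat \<Rightarrow> (nat \<Rightarrow> nat \<Rightarrow> nat) \<Rightarrow> nat \<Rightarrow> nat" where
  "rs n S i = (\<Sum>j=1..n. S i j)"

definition cs :: "nat \<Rightarrow> (nat \<Rightarrow> nat \<Rightarrow> nat) \<Rightarrow> nat \<Rightarrow> nat" where
  "cs m S j = (\<Sum>i=1..m. S i j)"

definition ars :: "nat \<Rightarrow> (nat \<Rightarrow> nat \<Rightarrow> nat) \<Rightarrow> nat \<Rightarrow> nat" where
  "ars n S i = i + rs n S i"

definition acs :: "nat \<Rightarrow> (nat \<Rightarrow> nat \<Rightarrow> nat) \<Rightarrow> nat \<Rightarrow> nat" where
  "acs m S j = j + cs m S j"

definition PC :: "nat \<Rightarrow> nat \<Rightarrow> (nat \<Rightarrow> nat \<Rightarrow> nat) \<Rightarrow> (nat \<Rightarrow> nat \<Rightarrow> nat) \<Rightarrow> bool" where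
  "PC m n S1 S2 \<longleftrightarrow> acs m S1 ` {1..n} \<union> ars n S2 ` {1..m} = {1..m+n}"

definition syl_rep :: "nat \<Rightarrow> nat \<Rightarrow> (nat \<Rightarrow> nat) \<Rightarrow> (nat \<Rightarrow> nat)
    \<Rightarrow> (nat \<Rightarrow> nat \<Rightarrow> nat) \<Rightarrow> (nat \<Rightarrow> nat \<Rightarrow> nat) \<Rightarrow> bool" where
  "syl_rep m n \<mu> \<nu> S1 S2 \<longleftrightarrow> is01 m n S1 \<and> is01 m n S2
     \<and> (\<forall>i\<in>{1..m}. rs n S1 i = \<mu> i) \<and> (\<forall>j\<in>{1..n}. cs m S2 j = \<nu> j)
     \<and> PC m n S1 S2"

end

theory Submission
  imports Defs
begin

text \<open>Every entry of the Sylvester-type matrix is a sum of squarefree monomials with coefficient 1,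
so no cancellation can occur in the permanent: its support consists of the products obtained by
choosing, for some permutation \<open>\<sigma>\<close>, one monomial in each entry \<open>(r, \<sigma> r)\<close>.
Choosing \<open>\<alpha>\<^sub>I\<close> in row \<open>j \<le> n\<close> forces \<open>\<sigma> j = j + |I|\<close>, and choosing \<open>\<beta>\<^sub>J\<close> in row \<open>n + i\<close>
forces \<open>\<sigma> (n + i) = i + |J|\<close>. Recording the sets \<open>I\<close> as the columns of \<open>S\<^sub>1\<close> and the sets \<open>J\<close>
as the rows of \<open>S\<^sub>2\<close> turns these values into \<open>acs(S\<^sub>1)\<close> and \<open>ars(S\<^sub>2)\<close>, so that \<open>\<sigma>\<close> being a
permutation becomes \<open>PC(S\<^sub>1, S\<^sub>2)\<close>, and the chosen product becomes \<open>\<alpha>\<^bsup>rs(S\<^sub>1)\<^esup>\<beta>\<^bsup>cs(S\<^sub>2)\<^esup>\<close>.\<close>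

lemma lookup_sum_single_one:
  assumes "finite A"
  shows "Poly_Mapping.lookup (\<Sum>x\<in>A. Poly_Mapping.single (h x) (1::'b::semiring_1)) t
       = of_nat (card {x\<in>A. h x = t})"
  using assms by (simp add: lookup_sum lookup_single when_def sum.If_cases Collect_conj_eq)

lemma keys_sum_single_one:
  assumes "finite A"
  shows "Poly_Mapping.keys (\<Sum>x\<in>A. Poly_Mapping.single (h x) (1::'b::semiring_char_0)) = h ` A"
  using assms by (auto simp: in_keys_iff lookup_sum_single_one card_eq_0_iff)

lemma prod_single_one:
  "(\<Prod>x\<in>A. Poly_Mapping.single (h x) (1::'b::comm_semiring_1)) = Poly_Mapping.single (sum h A) 1"
  by (induction A rule: infinite_finite_induct) (auto simp: mult_single)

lemma prod_sum_single_one: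
  assumes "finite R" "\<And>r. r \<in> R \<Longrightarrow> finite (K r)"
  shows "(\<Prod>r\<in>R. \<Sum>x\<in>K r. Poly_Mapping.single (h r x) (1::'b::comm_semiring_1))
       = (\<Sum>g\<in>Pi\<^sub>E R K. Poly_Mapping.single (\<Sum>r\<in>R. h r (g r)) 1)"
  by (simp add: prod_sum_PiE[OF assms] prod_single_one)

text \<open>Uniform description of the rows: row \<open>r\<close> holds the elementary symmetric polynomials in the
variables \<open>row_var n r ` row_range m n r\<close>, the one of degree \<open>k\<close> sitting in column
\<open>row_offset n r + k\<close>.\<close>

definition row_var :: "nat \<Rightarrow> nat \<Rightarrow> nat \<Rightarrow> var" where
  "row_var n r x = (if r \<le> n then Inl x else Inr x)"

definition row_offset :: "nat \<Rightarrow> nat \<Rightarrow> nat" where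
  "row_offset n r = (if r \<le> n then r else r - n)"

definition row_range :: "nat \<Rightarrow> nat \<Rightarrow> nat \<Rightarrow> nat set" where
  "row_range m n r = (if r \<le> n then {1..m} else {1..n})"

definition row_mon :: "nat \<Rightarrow> nat \<Rightarrow> nat set \<Rightarrow> mon" where
  "row_mon n r X = (\<Sum>x\<in>X. Poly_Mapping.single (row_var n r x) 1)"

definition row_choices :: "nat \<Rightarrow> nat \<Rightarrow> nat \<Rightarrow> nat \<Rightarrow> nat set set" where
  "row_choices m n r c = {X. X \<subseteq> row_range m n r \<and> row_offset n r + card X = c}"

lemma finite_row_range: "finite (row_range m n r)"
  by (simp add: row_range_def)

lemma finite_row_choices: "finite (row_choices m n r c)"
  by (rule finite_subset[of _ "Pow (row_range m n r)"]) (auto simp: row_choices_def finite_row_range)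

lemma lookup_row_mon:
  assumes "finite X"
  shows "Poly_Mapping.lookup (row_mon n r X) v = (if v \<in> row_var n r ` X then 1 else 0)"
proof -
  have "{x\<in>X. row_var n r x = v} = (if v \<in> row_var n r ` X then {THE x. row_var n r x = v} else {})"
    by (auto simp: row_var_def split: if_splits)
  then show ?thesis
    unfolding row_mon_def lookup_sum_single_one[OF assms] by simp
qed

lemma a_el_eq_sum_single:
  "a_el m k = (\<Sum>I\<in>{I. I \<subseteq> {1..m} \<and> card I = k}. Poly_Mapping.single (\<Sum>i\<in>I. Poly_Mapping.single (Inl i) 1) 1)"
  unfolding a_el_def Var_def prod_single_one ..

lemma b_el_eq_sum_single:
  "b_el n k = (\<Sum>J\<in>{J. J \<subseteq> {1..n} \<and> card J = k}. Poly_Mapping.single (\<Sum>j\<in>J. Poly_Mapping.single (Inr j) 1) 1)"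
  unfolding b_el_def Var_def prod_single_one ..

lemma Collect_subset_offset_card_eq:
  "{X. X \<subseteq> {1..k} \<and> r + card X = c} = (if r \<le> c \<and> c - r \<le> k then {X. X \<subseteq> {1..k} \<and> card X = c - r} else {})"
  by (auto dest: card_mono[OF finite_atLeastAtMost])

lemma syl_matrix_eq_sum_single:
  assumes "r \<in> {1..m+n}"
  shows "syl_matrix m n r c = (\<Sum>X\<in>row_choices m n r c. Poly_Mapping.single (row_mon n r X) 1)"
proof (cases "r \<le> n")
  case True
  then show ?thesis
    using assms Collect_subset_offset_card_eq[of m r c]
    by (simp add: syl_matrix_def row_choices_def row_mon_def row_var_def row_offset_def
        row_range_def a_el_eq_sum_single)
next
  case False
  then show ?thesis
    using assms Collect_subset_offset_card_eq[of n "r - n" c]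
    by (simp add: syl_matrix_def row_choices_def row_mon_def row_var_def row_offset_def
        row_range_def b_el_eq_sum_single Let_def)
qed

lemma S_poly_eq_sum_single:
  "S_poly m n = (\<Sum>\<sigma>\<in>{\<sigma>. \<sigma> permutes {1..m+n}}. \<Sum>X\<in>Pi\<^sub>E {1..m+n} (\<lambda>r. row_choices m n r (\<sigma> r)).
      Poly_Mapping.single (\<Sum>r=1..m+n. row_mon n r (X r)) 1)"
proof -
  have "(\<Prod>r=1..m+n. syl_matrix m n r (\<sigma> r))
      = (\<Prod>r=1..m+n. \<Sum>X\<in>row_choices m n r (\<sigma> r). Poly_Mapping.single (row_mon n r X) 1)" for \<sigma>
    by (rule prod.cong) (simp_all add: syl_matrix_eq_sum_single)
  then show ?thesis
    unfolding S_poly_def per_def by (simp add: prod_sum_single_one finite_row_choices)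
qed

lemma keys_S_poly:
  "Poly_Mapping.keys (S_poly m n) = {(\<Sum>r=1..m+n. row_mon n r (X r)) | \<sigma> X.
      \<sigma> permutes {1..m+n} \<and> X \<in> Pi\<^sub>E {1..m+n} (\<lambda>r. row_choices m n r (\<sigma> r))}"
proof -
  define P where "P = {\<sigma>. \<sigma> permutes {1..m+n}}"
  define C where "C \<sigma> = Pi\<^sub>E {1..m+n} (\<lambda>r. row_choices m n r (\<sigma> r))" for \<sigma>
  define t where "t X = (\<Sum>r=1..m+n. row_mon n r (X r))" for X
  have fin: "finite P" "finite (C \<sigma>)" for \<sigma>
    by (simp_all add: P_def C_def finite_permutations finite_PiE finite_row_choices)
  have "S_poly m n = (\<Sum>\<sigma>\<in>P. \<Sum>X\<in>C \<sigma>. Poly_Mapping.single (t X) 1)"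
    unfolding P_def C_def t_def by (rule S_poly_eq_sum_single)
  also have "\<dots> = (\<Sum>(\<sigma>, X)\<in>Sigma P C. Poly_Mapping.single (t X) 1)"
    by (rule sum.Sigma) (use fin in auto)
  finally have "Poly_Mapping.keys (S_poly m n) = (t \<circ> snd) ` Sigma P C"
    using keys_sum_single_one[of "Sigma P C" "t \<circ> snd"] fin by (simp add: case_prod_unfold)
  then show ?thesis
    unfolding P_def C_def t_def by (auto simp: image_def)
qed

lemma permutes_if_image_eq:
  assumes "finite A" "f ` A = A"
  shows "(\<lambda>x. if x \<in> A then f x else x) permutes A"
proof (rule bij_imp_permutes)
  have "inj_on f A" using assms by (simp add: finite_surj_inj)
  then show "bij_betw (\<lambda>x. if x \<in> A then f x else x) A A"
    using assms(2) by (simp add: bij_betw_def cong: inj_on_cong image_cong)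
qed simp

lemma in_keys_S_poly_iff_choices:
  "t \<in> Poly_Mapping.keys (S_poly m n) \<longleftrightarrow>
    (\<exists>X. (\<forall>r\<in>{1..m+n}. X r \<subseteq> row_range m n r)
       \<and> (\<lambda>r. row_offset n r + card (X r)) ` {1..m+n} = {1..m+n}
       \<and> t = (\<Sum>r=1..m+n. row_mon n r (X r)))"
proof
  assume "t \<in> Poly_Mapping.keys (S_poly m n)"
  then obtain \<sigma> X where \<sigma>: "\<sigma> permutes {1..m+n}"
    and X: "X \<in> Pi\<^sub>E {1..m+n} (\<lambda>r. row_choices m n r (\<sigma> r))" and t: "t = (\<Sum>r=1..m+n. row_mon n r (X r))"
    unfolding keys_S_poly by blast
  have "(\<lambda>r. row_offset n r + card (X r)) ` {1..m+n} = \<sigma> ` {1..m+n}"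
    using X by (intro image_cong) (auto simp: row_choices_def)
  then show "\<exists>X. (\<forall>r\<in>{1..m+n}. X r \<subseteq> row_range m n r)
       \<and> (\<lambda>r. row_offset n r + card (X r)) ` {1..m+n} = {1..m+n}
       \<and> t = (\<Sum>r=1..m+n. row_mon n r (X r))"
    using X t permutes_image[OF \<sigma>] by (auto simp: row_choices_def)
next
  assume "\<exists>X. (\<forall>r\<in>{1..m+n}. X r \<subseteq> row_range m n r)
       \<and> (\<lambda>r. row_offset n r + card (X r)) ` {1..m+n} = {1..m+n}
       \<and> t = (\<Sum>r=1..m+n. row_mon n r (X r))"
  then obtain X where X: "\<forall>r\<in>{1..m+n}. X r \<subseteq> row_range m n r"
    and img: "(\<lambda>r. row_offset n r + card (X r)) ` {1..m+n} = {1..m+n}"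
    and t: "t = (\<Sum>r=1..m+n. row_mon n r (X r))" by blast
  let ?\<sigma> = "\<lambda>r. if r \<in> {1..m+n} then row_offset n r + card (X r) else r"
  have "?\<sigma> permutes {1..m+n}"
    using permutes_if_image_eq[OF _ img] by simp
  moreover have "restrict X {1..m+n} \<in> Pi\<^sub>E {1..m+n} (\<lambda>r. row_choices m n r (?\<sigma> r))"
    using X by (simp add: row_choices_def)
  moreover have "t = (\<Sum>r=1..m+n. row_mon n r (restrict X {1..m+n} r))"
    unfolding t by simp
  ultimately show "t \<in> Poly_Mapping.keys (S_poly m n)"
    unfolding keys_S_poly by blast
qed

lemma sum_atLeastAtMost_split_blocks:
  "(\<Sum>r=1..m+n. f r) = (\<Sum>j=1..n. f j) + (\<Sum>i=1..m. f (n + i))" for m n :: nat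
  using sum.ub_add_nat[of 1 n f m] sum.shift_bounds_cl_nat_ivl[of f 1 n m]
  by (simp add: add.commute)

lemma lookup_sum_row_mon:
  assumes "\<forall>r\<in>{1..m+n}. X r \<subseteq> row_range m n r"
  shows "Poly_Mapping.lookup (\<Sum>r=1..m+n. row_mon n r (X r)) (Inl i) = (\<Sum>j=1..n. if i \<in> X j then 1 else 0)"
    and "Poly_Mapping.lookup (\<Sum>r=1..m+n. row_mon n r (X r)) (Inr j) = (\<Sum>i=1..m. if j \<in> X (n+i) then 1 else 0)"
proof -
  have fin: "finite (X r)" if "r \<in> {1..m+n}" for r
    using assms that finite_row_range finite_subset by blast
  have top: "Poly_Mapping.lookup (row_mon n j (X j)) v = (if v \<in> Inl ` X j then 1 else 0)"
    if "j \<in> {1..n}" for j v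
    using that fin[of j] by (simp add: lookup_row_mon row_var_def)
  have bot: "Poly_Mapping.lookup (row_mon n (n+i) (X (n+i))) v = (if v \<in> Inr ` X (n+i) then 1 else 0)"
    if "i \<in> {1..m}" for i v
    using that fin[of "n+i"] by (simp add: lookup_row_mon row_var_def)
  have "(\<Sum>j=1..n. Poly_Mapping.lookup (row_mon n j (X j)) (Inl i)) = (\<Sum>j=1..n. if i \<in> X j then 1 else 0)"
    and "(\<Sum>i'=1..m. Poly_Mapping.lookup (row_mon n (n+i') (X (n+i'))) (Inl i)) = 0"
    by (auto simp: top bot intro!: sum.cong sum.neutral)
  then show "Poly_Mapping.lookup (\<Sum>r=1..m+n. row_mon n r (X r)) (Inl i) = (\<Sum>j=1..n. if i \<in> X j then 1 else 0)"
    unfolding sum_atLeastAtMost_split_blocks lookup_add lookup_sum by simp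
  have "(\<Sum>j'=1..n. Poly_Mapping.lookup (row_mon n j' (X j')) (Inr j)) = 0"
    and "(\<Sum>i=1..m. Poly_Mapping.lookup (row_mon n (n+i) (X (n+i))) (Inr j)) = (\<Sum>i=1..m. if j \<in> X (n+i) then 1 else 0)"
    by (auto simp: top bot intro!: sum.cong sum.neutral)
  then show "Poly_Mapping.lookup (\<Sum>r=1..m+n. row_mon n r (X r)) (Inr j) = (\<Sum>i=1..m. if j \<in> X (n+i) then 1 else 0)"
    unfolding sum_atLeastAtMost_split_blocks lookup_add lookup_sum by simp
qed

lemma lookup_syl_mono:
  "Poly_Mapping.lookup (syl_mono m n \<mu> \<nu>) (Inl i) = (if i \<in> {1..m} then \<mu> i else 0)"
  "Poly_Mapping.lookup (syl_mono m n \<mu> \<nu>) (Inr j) = (if j \<in> {1..n} then \<nu> j else 0)"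
  by (auto simp: syl_mono_def lookup_add lookup_sum lookup_single when_def)

lemma syl_mono_eq_iff:
  "syl_mono m n \<mu> \<nu> = syl_mono m n \<mu>' \<nu>' \<longleftrightarrow> (\<forall>i\<in>{1..m}. \<mu> i = \<mu>' i) \<and> (\<forall>j\<in>{1..n}. \<nu> j = \<nu>' j)"
proof
  assume "syl_mono m n \<mu> \<nu> = syl_mono m n \<mu>' \<nu>'"
  then have lookup: "Poly_Mapping.lookup (syl_mono m n \<mu> \<nu>) v = Poly_Mapping.lookup (syl_mono m n \<mu>' \<nu>') v"
    for v by simp
  have "\<mu> i = \<mu>' i" if "i \<in> {1..m}" for i
    using lookup[of "Inl i"] that by (simp add: lookup_syl_mono)
  moreover have "\<nu> j = \<nu>' j" if "j \<in> {1..n}" for j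
    using lookup[of "Inr j"] that by (simp add: lookup_syl_mono)
  ultimately show "(\<forall>i\<in>{1..m}. \<mu> i = \<mu>' i) \<and> (\<forall>j\<in>{1..n}. \<nu> j = \<nu>' j)"
    by blast
next
  assume "(\<forall>i\<in>{1..m}. \<mu> i = \<mu>' i) \<and> (\<forall>j\<in>{1..n}. \<nu> j = \<nu>' j)"
  then have "Poly_Mapping.lookup (syl_mono m n \<mu> \<nu>) v = Poly_Mapping.lookup (syl_mono m n \<mu>' \<nu>') v"
    for v by (cases v) (simp_all add: lookup_syl_mono)
  then show "syl_mono m n \<mu> \<nu> = syl_mono m n \<mu>' \<nu>'"
    by (rule poly_mapping_eqI)
qed

lemma sum_01_eq_card:
  fixes f :: "'a \<Rightarrow> nat"
  assumes "finite A" "\<forall>x\<in>A. f x \<in> {0, 1}"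
  shows "sum f A = card {x\<in>A. f x = 1}"
proof -
  have "sum f A = (\<Sum>x\<in>A. if f x = 1 then 1 else 0)"
    using assms(2) by (intro sum.cong) auto
  then show ?thesis
    using assms(1) by (simp add: sum.If_cases Collect_conj_eq Int_commute)
qed

definition matrix_choice :: "nat \<Rightarrow> nat \<Rightarrow> (nat \<Rightarrow> nat \<Rightarrow> nat) \<Rightarrow> (nat \<Rightarrow> nat \<Rightarrow> nat) \<Rightarrow> nat \<Rightarrow> nat set" where
  "matrix_choice m n S1 S2 r = (if r \<le> n then {i\<in>{1..m}. S1 i r = 1} else {j\<in>{1..n}. S2 (r - n) j = 1})"

lemma matrix_choice_subset: "matrix_choice m n S1 S2 r \<subseteq> row_range m n r"
  by (auto simp: matrix_choice_def row_range_def)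

lemma card_matrix_choice:
  assumes "is01 m n S1" "is01 m n S2"
  shows "j \<in> {1..n} \<Longrightarrow> card (matrix_choice m n S1 S2 j) = cs m S1 j"
    and "i \<in> {1..m} \<Longrightarrow> card (matrix_choice m n S1 S2 (n + i)) = rs n S2 i"
  using assms by (auto simp: matrix_choice_def cs_def rs_def is01_def sum_01_eq_card)

lemma image_matrix_choice_eq_PC:
  assumes "is01 m n S1" "is01 m n S2"
  shows "(\<lambda>r. row_offset n r + card (matrix_choice m n S1 S2 r)) ` {1..m+n} = {1..m+n}
    \<longleftrightarrow> PC m n S1 S2"
proof -
  have blocks: "{1..m+n} = {1..n} \<union> (+) n ` {1..m}"
    by auto
  have "(\<lambda>r. row_offset n r + card (matrix_choice m n S1 S2 r)) ` {1..m+n}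
      = acs m S1 ` {1..n} \<union> ars n S2 ` {1..m}"
    unfolding blocks image_Un image_image
    using card_matrix_choice[OF assms]
    by (auto simp: row_offset_def acs_def ars_def simp del: image_add_atLeastAtMost intro!: image_cong)
  then show ?thesis
    unfolding PC_def by simp
qed

lemma sum_row_mon_matrix_choice:
  assumes "is01 m n S1" "is01 m n S2"
  shows "(\<Sum>r=1..m+n. row_mon n r (matrix_choice m n S1 S2 r)) = syl_mono m n (rs n S1) (cs m S2)"
proof (rule poly_mapping_eqI)
  fix v
  let ?C = "matrix_choice m n S1 S2"
  have S1: "(if i \<in> ?C j then 1 else 0) = S1 i j" if "i \<in> {1..m}" "j \<in> {1..n}" for i j
    using assms(1) that unfolding is01_def matrix_choice_def by force
  have S2: "(if j \<in> ?C (n+i) then 1 else 0) = S2 i j" if "i \<in> {1..m}" "j \<in> {1..n}" for i j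
    using assms(2) that unfolding is01_def matrix_choice_def by force
  have "(\<Sum>j=1..n. if i \<in> ?C j then 1 else 0) = (if i \<in> {1..m} then rs n S1 i else 0)" for i
    using S1 unfolding rs_def by (auto simp: matrix_choice_def intro!: sum.cong sum.neutral)
  moreover
  have "(\<Sum>i=1..m. if j \<in> ?C (n+i) then 1 else 0) = (if j \<in> {1..n} then cs m S2 j else 0)" for j
    using S2 unfolding cs_def by (auto simp: matrix_choice_def intro!: sum.cong sum.neutral)
  ultimately show "Poly_Mapping.lookup (\<Sum>r=1..m+n. row_mon n r (?C r)) v
      = Poly_Mapping.lookup (syl_mono m n (rs n S1) (cs m S2)) v"
    using lookup_sum_row_mon[of m n ?C] by (cases v) (simp_all add: matrix_choice_subset lookup_syl_mono)
qed

lemma in_keys_S_poly_iff_matrices: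
  "t \<in> Poly_Mapping.keys (S_poly m n) \<longleftrightarrow>
    (\<exists>S1 S2. is01 m n S1 \<and> is01 m n S2 \<and> PC m n S1 S2 \<and> t = syl_mono m n (rs n S1) (cs m S2))"
proof
  assume "t \<in> Poly_Mapping.keys (S_poly m n)"
  then obtain X where X: "\<forall>r\<in>{1..m+n}. X r \<subseteq> row_range m n r"
    and img: "(\<lambda>r. row_offset n r + card (X r)) ` {1..m+n} = {1..m+n}"
    and t: "t = (\<Sum>r=1..m+n. row_mon n r (X r))"
    unfolding in_keys_S_poly_iff_choices by blast
  define S1 where "S1 i j = (if i \<in> X j then 1 else 0 :: nat)" for i j
  define S2 where "S2 i j = (if j \<in> X (n + i) then 1 else 0 :: nat)" for i j
  have S: "is01 m n S1" "is01 m n S2"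
    by (simp_all add: is01_def S1_def S2_def)
  have C: "matrix_choice m n S1 S2 r = X r" if "r \<in> {1..m+n}" for r
  proof -
    have "X r \<subseteq> row_range m n r"
      using X that by blast
    then show ?thesis
      using that by (auto simp: matrix_choice_def S1_def S2_def row_range_def)
  qed
  have "(\<lambda>r. row_offset n r + card (matrix_choice m n S1 S2 r)) ` {1..m+n}
      = (\<lambda>r. row_offset n r + card (X r)) ` {1..m+n}"
    using C by (intro image_cong) simp_all
  with img have "(\<lambda>r. row_offset n r + card (matrix_choice m n S1 S2 r)) ` {1..m+n} = {1..m+n}"
    by simp
  moreover have "t = (\<Sum>r=1..m+n. row_mon n r (matrix_choice m n S1 S2 r))"
    unfolding t using C by (intro sum.cong) simp_all
  ultimately show "\<exists>S1 S2. is01 m n S1 \<and> is01 m n S2 \<and> PC m n S1 S2 \<and> t = syl_mono m n (rs n S1) (cs m S2)"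
    using S image_matrix_choice_eq_PC[OF S] sum_row_mon_matrix_choice[OF S] by blast
next
  assume "\<exists>S1 S2. is01 m n S1 \<and> is01 m n S2 \<and> PC m n S1 S2 \<and> t = syl_mono m n (rs n S1) (cs m S2)"
  then obtain S1 S2 where S: "is01 m n S1" "is01 m n S2"
    and "PC m n S1 S2" "t = syl_mono m n (rs n S1) (cs m S2)" by blast
  then show "t \<in> Poly_Mapping.keys (S_poly m n)"
    unfolding in_keys_S_poly_iff_choices
    using image_matrix_choice_eq_PC[OF S] sum_row_mon_matrix_choice[OF S]
    by (intro exI[of _ "matrix_choice m n S1 S2"]) (simp add: matrix_choice_subset)
qed

theorem mainTheorem3:
  fixes m n :: nat and \<mu> \<nu> :: "nat \<Rightarrow> nat"
  shows "coeff (S_poly m n) (syl_mono m n \<mu> \<nu>) \<noteq> 0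
     \<longleftrightarrow> (\<exists>S1 S2. syl_rep m n \<mu> \<nu> S1 S2)"
proof -
  have "coeff (S_poly m n) (syl_mono m n \<mu> \<nu>) \<noteq> 0 \<longleftrightarrow> syl_mono m n \<mu> \<nu> \<in> Poly_Mapping.keys (S_poly m n)"
    by (simp add: coeff_def in_keys_iff)
  also have "\<dots> \<longleftrightarrow> (\<exists>S1 S2. is01 m n S1 \<and> is01 m n S2 \<and> PC m n S1 S2
      \<and> syl_mono m n \<mu> \<nu> = syl_mono m n (rs n S1) (cs m S2))"
    by (rule in_keys_S_poly_iff_matrices)
  also have "\<dots> \<longleftrightarrow> (\<exists>S1 S2. syl_rep m n \<mu> \<nu> S1 S2)"
    unfolding syl_mono_eq_iff syl_rep_def by (metis (no_types))
  finally show ?thesis .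
qed

end
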